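(* In the setting described in the context, there is $M>0$ independent of $\epsilon\in(0,1)$ such that for all $(x,y)\in\mathbb{R}^2$ and $t\ge0$, $$|\rho^\epsilon(x,y,t)|\le\frac{M}{\epsilon^{2\alpha}},\qquad \Big|\frac{\partial\rho^\epsilon}{\partial x}(x,y,t)\Big|,\ \Big|\frac{\partial\rho^\epsilon}{\partial y}(x,y,t)\Big|\le\frac{M}{\epsilon^{3\alpha}}.$$
   Context: Let $\mathcal{C}_b(\mathbb{R}^2)$ be the Banach space of bounded continuous real functions on $\mathbb{R}^2$ with sup norm; for real $u$, $u^+=\max(0,u)$, $u^-=\max(0,-u)$. For $0<\epsilon<1$ let $u^\epsilon,v^\epsilon:\mathbb{R}^2\times[0,\infty)\to\mathbb{R}$ be $2\pi$-periodic in $x$ and in $y$, with $t\mapsto u^\epsilon(\cdot,\cdot,t),v^\epsilon(\cdot,\cdot,t)$ continuous into $\mathcal{C}_b(\mathbb{R}^2)$ and bounded uniformly in $\epsilon,x,y,t$. Let $\rho_0^\epsilon\in\mathcal{C}_b(\mathbb{R}^2)$ be $2\pi$-periodic in each variable with $\sup_\epsilon\int_{[-\pi,\pi]^2}|\rho_0^\epsilon|<\infty$. Let $X^\epsilon$ be the global $\mathcal{C}^1$ solution $[0,\infty)\to\mathcal{C}_b(\mathbb{R}^2)$ of $X^\epsilon(x,y,0)=\rho_0^\epsilon(x,y)$ and $$\frac{d}{dt}X^\epsilon(x,y,t)=\frac1\epsilon\big[(X^\epsilon u^{\epsilon+})(x-\epsilon,y,t)-(X^\epsilon|u^\epsilon|)(x,y,t)+(X^\epsilon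 u^{\epsilon-})(x+\epsilon,y,t)+(X^\epsilon v^{\epsilon+})(x,y-\epsilon,t)-(X^\epsilon|v^\epsilon|)(x,y,t)+(X^\epsilon v^{\epsilon-})(x,y+\epsilon,t)\big].$$ Let $\phi\in\mathcal{C}^\infty(\mathbb{R}^2)$ have compact support with $\int\phi=1$, $\alpha\in]0,1]$, $\phi_{\epsilon^\alpha}(x,y)=\epsilon^{-2\alpha}\phi(x/\epsilon^\alpha,y/\epsilon^\alpha)$, and $\rho^\epsilon(x,y,t)=(X^\epsilon(\cdot,\cdot,t)*\phi_{\epsilon^\alpha})(x,y)$. *)

theory Defs
  imports "HOL-Analysis.Analysis"
begin

text \<open>Smoothness (C-infinity) of a real function on the plane: there is a family S of
functions containing f, closed under taking the two partial derivatives, each member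
being (Frechet) differentiable everywhere with partials in S.\<close>
definition smooth2 :: "(real \<times> real \<Rightarrow> real) \<Rightarrow> bool" where
  "smooth2 f \<longleftrightarrow> (\<exists>S. f \<in> S \<and> (\<forall>g\<in>S. \<exists>gx\<in>S. \<exists>gy\<in>S.
      \<forall>p. (g has_derivative (\<lambda>h. fst h * gx p + snd h * gy p)) (at p)))"

definition periodic2 :: "(real \<times> real \<Rightarrow> real) \<Rightarrow> bool" where
  "periodic2 f \<longleftrightarrow> (\<forall>x y. f (x + 2*pi, y) = f (x, y) \<and> f (x, y + 2*pi) = f (x, y))"

definition mollifier :: "real \<Rightarrow> (real \<times> real \<Rightarrow> real) \<Rightarrow> real \<times> real \<Rightarrow> real" where
  "mollifier \<delta> \<phi> p = \<phi> (fst p / \<delta>, snd p / \<delta>) / \<delta>^2"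

definition conv2 :: "(real \<times> real \<Rightarrow> real) \<Rightarrow> (real \<times> real \<Rightarrow> real) \<Rightarrow> real \<times> real \<Rightarrow> real" where
  "conv2 f g p = integral UNIV (\<lambda>q. f (p - q) * g q)"

definition upwind_rhs :: "real \<Rightarrow> (real \<times> real \<Rightarrow> real) \<Rightarrow> (real \<times> real \<Rightarrow> real)
     \<Rightarrow> (real \<times> real \<Rightarrow> real) \<Rightarrow> real \<Rightarrow> real \<Rightarrow> real" where
  "upwind_rhs \<epsilon> X u v x y = (1/\<epsilon>) *
     ( X (x - \<epsilon>, y) * max 0 (u (x - \<epsilon>, y))
     - X (x, y) * \<bar>u (x, y)\<bar>
     + X (x + \<epsilon>, y) * max 0 (- u (x + \<epsilon>, y))
     + X (x, y - \<epsilon>) * max 0 (v (x, y - \<epsilon>))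
     - X (x, y) * \<bar>v (x, y)\<bar>
     + X (x, y + \<epsilon>) * max 0 (- v (x, y + \<epsilon>)))"

end

(*
  The upwind scheme is monotone and conservative. Under the CFL condition h (|u| + |v|) <= epsilon,
  an explicit Euler step X + h L X is a convex combination of translates of X, so
  |X + h L X| <= |X| + h L |X|; and L, being in flux form, integrates to zero over a period cell.
  Hence the L1 norm of X(t) over a period cell does not increase, as long as X(t) stays
  2 pi-periodic, which holds because X minus its translate solves a linear system with zero
  initial value.

  The mollified density and its partial derivatives are integrals of X against phi_delta and its
  partials, delta = epsilon^alpha, over a square of side 4 R around the point; this square is
  covered by k^2 period cells. Since |phi_delta| <= Phi / delta^2 and its partial derivatives are
  bounded by Phi / delta^3, the bounds hold with M = Phi k^2 C + 1, where C bounds the initial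
  L1 norms.
*)

theory Submission
  imports Defs
begin

section \<open>Integrals of periodic functions\<close>

lemma integrable_on_cbox_if_continuous:
  fixes f :: "'a::euclidean_space \<Rightarrow> 'b::banach"
  shows "continuous_on UNIV f \<Longrightarrow> f integrable_on cbox a b"
  by (rule integrable_continuous[OF continuous_on_subset]) auto

lemma periodic_shift_int:
  fixes h :: "real \<Rightarrow> 'a"
  assumes per: "\<And>x. h (x + c) = h x"
  shows "h (x + of_int n * c) = h x"
proof -
  have nat: "h (y + real m * c) = h y" for y m
  proof (induction m)
    case (Suc m)
    have "y + real (Suc m) * c = (y + real m * c) + c" by (simp add: algebra_simps)
    then show ?case using Suc per by metis
  qed simp
  show ?thesis
  proof (cases "n \<ge> 0")
    case True
    then show ?thesis using nat[of x "nat n"] by simp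
  next
    case False
    then have "x = (x + of_int n * c) + real (nat (-n)) * c" by (simp add: algebra_simps)
    then show ?thesis using nat[of "x + of_int n * c" "nat (-n)"] by metis
  qed
qed

lemma integral_periodic_period:
  fixes h :: "real \<Rightarrow> real"
  assumes cont: "continuous_on UNIV h" and per: "\<And>x. h (x + c) = h x" and c: "0 < c"
  shows "integral {a..a + c} h = integral {b..b + c} h"
proof -
  have hc: "continuous_on S h" for S using cont continuous_on_subset by blast
  have int: "h integrable_on {s..t}" for s t by (rule integrable_continuous_real[OF hc])
  have shift: "integral {s + d..t + d} h = integral {s..t} h" if "h \<circ> (\<lambda>x. x + d) = h" for s t d
    using integral_shift[OF hc, of s t d] that by simp
  define n where "n = \<lfloor>(a - b) / c\<rfloor>"
  define a' where "a' = a - of_int n * c"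
  have "of_int n \<le> (a - b) / c" "(a - b) / c < of_int n + 1"
    unfolding n_def by linarith+
  then have a': "b \<le> a'" "a' < b + c" using c by (simp_all add: a'_def field_simps)
  have "integral {a..a + c} h = integral {a'..a' + c} h"
    using shift[of "of_int n * c" a' "a' + c"] periodic_shift_int[of h c, OF per]
    by (simp add: a'_def algebra_simps comp_def)
  also have "\<dots> = integral {a'..b + c} h + integral {b + c..a' + c} h"
    using a' by (intro Henstock_Kurzweil_Integration.integral_combine[symmetric] int) auto
  also have "integral {b + c..a' + c} h = integral {b..a'} h"
    using shift[of c b a'] per by (simp add: comp_def)
  also have "integral {a'..b + c} h + integral {b..a'} h = integral {b..b + c} h"
    using a' by (subst add.commute, intro Henstock_Kurzweil_Integration.integral_combine int) auto
  finally show ?thesis .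
qed

lemma integral_periodic_multiple:
  fixes h :: "real \<Rightarrow> real"
  assumes cont: "continuous_on UNIV h" and per: "\<And>x. h (x + c) = h x" and c: "0 < c"
  shows "integral {a..a + real k * c} h = real k * integral {b..b + c} h"
proof (induction k)
  case 0
  then show ?case by simp
next
  case (Suc k)
  have int: "h integrable_on {s..t}" for s t
    by (rule integrable_continuous_real[OF continuous_on_subset[OF cont]]) simp
  have "integral {a..a + real (Suc k) * c} h
      = integral {a..a + real k * c} h + integral {a + real k * c..a + real k * c + c} h"
    using c Henstock_Kurzweil_Integration.integral_combine[OF _ _ int, of a "a + real k * c"
        "a + real (Suc k) * c"] by (simp add: algebra_simps)
  then show ?case
    using Suc integral_periodic_period[OF cont per c, of "a + real k * c" b]
    by (simp add: algebra_simps)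
qed

abbreviation period_cell :: "(real \<times> real) set"
  where "period_cell \<equiv> cbox (-pi, -pi) (pi, pi)"

definition square :: "real \<times> real \<Rightarrow> real \<Rightarrow> (real \<times> real) set"
  where "square c r = cbox (c - (r, r)) (c + (r, r))"

lemma mem_square: "z \<in> square c r \<longleftrightarrow> \<bar>fst z - fst c\<bar> \<le> r \<and> \<bar>snd z - snd c\<bar> \<le> r"
  by (cases z; cases c) (auto simp: square_def cbox_Pair_eq abs_le_iff)

lemma mem_square_if_norm_le:
  assumes "norm (z - c) \<le> r"
  shows "z \<in> square c r"
proof -
  obtain a b where ab: "z - c = (a, b)" by fastforce
  have "fst z - fst c = a" "snd z - snd c = b"
    using arg_cong[OF ab, of fst] arg_cong[OF ab, of snd] by (simp_all only: fst_diff snd_diff prod.sel)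
  moreover have "\<bar>a\<bar> \<le> r" "\<bar>b\<bar> \<le> r"
    using ab assms norm_fst_le[of a b] norm_snd_le[of b a] by simp_all
  ultimately show ?thesis by (simp add: mem_square)
qed

lemma integral_periodic2_square:
  fixes g :: "real \<times> real \<Rightarrow> real"
  assumes cont: "continuous_on UNIV g" and per: "periodic2 g"
  shows "integral (cbox (a1, a2) (a1 + real k * (2*pi), a2 + real k * (2*pi))) g
       = real k ^ 2 * integral period_cell g"
proof -
  have fubini: "integral (cbox (c1, c2) (d1, d2)) g = integral {c1..d1} (\<lambda>x. integral {c2..d2} (\<lambda>y. g (x, y)))"
    for c1 c2 d1 d2
    using integral_prod_continuous[OF continuous_on_subset[OF cont]] by simp
  define G where "G x = integral {-pi..pi} (\<lambda>y. g (x, y))" for x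
  have slice: "continuous_on UNIV (\<lambda>y. g (x, y))" for x
    by (rule continuous_on_compose2[OF cont]) (auto intro!: continuous_intros)
  have inner: "integral {a2..a2 + real k * (2*pi)} (\<lambda>y. g (x, y)) = real k * G x" for x
    using integral_periodic_multiple[OF slice, where c="2*pi" and b="-pi"] per
    by (simp add: G_def periodic2_def)
  have G_cont: "continuous_on UNIV G"
    unfolding G_def
    by (rule integral_continuous_on_param[where a="-pi" and b=pi, simplified])
       (use continuous_on_subset[OF cont, of "UNIV \<times> {-pi..pi}"] in \<open>simp add: case_prod_beta'\<close>)
  have G_per: "G (x + 2*pi) = G x" for x
    unfolding G_def using per by (simp add: periodic2_def)
  have "integral (cbox (a1, a2) (a1 + real k * (2*pi), a2 + real k * (2*pi))) g
      = integral {a1..a1 + real k * (2*pi)} (\<lambda>x. real k * G x)"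
    by (simp add: fubini inner)
  also have "\<dots> = real k * (real k * integral {-pi..pi} G)"
    using integral_periodic_multiple[OF G_cont G_per, where b="-pi"] by simp
  also have "integral {-pi..pi} G = integral period_cell g"
    by (simp add: fubini G_def[abs_def])
  finally show ?thesis by (simp add: power2_eq_square)
qed

lemma integral_periodic2_square_le:
  fixes g :: "real \<times> real \<Rightarrow> real"
  assumes cont: "continuous_on UNIV g" and per: "periodic2 g" and nonneg: "\<And>p. 0 \<le> g p"
    and "2 * r \<le> real k * (2*pi)"
  shows "integral (square c r) g \<le> real k ^ 2 * integral period_cell g"
proof -
  obtain a b where c: "c = (a, b)" by fastforce
  have "integral (square c r) g
     \<le> integral (cbox (a - r, b - r) (a - r + real k * (2*pi), b - r + real k * (2*pi))) g"
  proof (rule integral_subset_le)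
    show "square c r \<subseteq> cbox (a - r, b - r) (a - r + real k * (2*pi), b - r + real k * (2*pi))"
      using assms(4) by (auto simp: c square_def cbox_Pair_eq)
  qed (use nonneg in \<open>auto simp: square_def intro: integrable_on_cbox_if_continuous[OF cont]\<close>)
  also have "\<dots> = real k ^ 2 * integral period_cell g"
    by (rule integral_periodic2_square[OF cont per])
  finally show ?thesis .
qed

lemma integral_periodic2_translate:
  fixes g :: "real \<times> real \<Rightarrow> real"
  assumes cont: "continuous_on UNIV g" and per: "periodic2 g"
  shows "integral period_cell (\<lambda>p. g (p - c)) = integral period_cell g"
proof -
  have "integral period_cell (\<lambda>p. g (p - c)) = integral (cbox ((-pi, -pi) - c) ((pi, pi) - c)) g"
    using integral_shift_cbox[of "(-pi, -pi) - c" "-c" "(pi, pi) - c" g] by simp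
  also have "\<dots> = integral period_cell g"
    using integral_periodic2_square[OF cont per, of "-pi - fst c" "-pi - snd c" 1]
    by (cases c) (simp add: algebra_simps)
  finally show ?thesis .
qed

lemma has_integral_periodic2_translate_diff:
  fixes g :: "real \<times> real \<Rightarrow> real"
  assumes cont: "continuous_on UNIV g" and per: "periodic2 g"
  shows "((\<lambda>p. g (p - c) - g p) has_integral 0) period_cell"
proof -
  have "continuous_on UNIV (\<lambda>p. g (p - c))"
    by (rule continuous_on_compose2[OF cont]) (auto intro!: continuous_intros)
  then have "((\<lambda>p. g (p - c)) has_integral integral period_cell g) period_cell"
    using integrable_integral[OF integrable_on_cbox_if_continuous] integral_periodic2_translate[OF cont per]
    by metis
  from has_integral_diff[OF this integrable_integral[OF integrable_on_cbox_if_continuous[OF cont]]] show ?thesis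
    by simp
qed

section \<open>The upwind operator\<close>

lemma continuous_on_upwind_rhs:
  assumes "continuous_on UNIV Y" "continuous_on UNIV U" "continuous_on UNIV V"
  shows "continuous_on UNIV (\<lambda>p. upwind_rhs \<epsilon> Y U V (fst p) (snd p))"
  unfolding upwind_rhs_def
  by (intro continuous_intros continuous_on_compose2[OF assms(1)] continuous_on_compose2[OF assms(2)]
      continuous_on_compose2[OF assms(3)]) auto

lemma upwind_rhs_diff:
  "upwind_rhs \<epsilon> (\<lambda>p. Y p - Z p) U V x y = upwind_rhs \<epsilon> Y U V x y - upwind_rhs \<epsilon> Z U V x y"
  by (simp add: upwind_rhs_def algebra_simps)

lemma upwind_rhs_translate:
  assumes "\<And>x y. U (x + a, y + b) = U (x, y)" "\<And>x y. V (x + a, y + b) = V (x, y)"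
  shows "upwind_rhs \<epsilon> Y U V (x + a) (y + b) = upwind_rhs \<epsilon> (\<lambda>p. Y (fst p + a, snd p + b)) U V x y"
proof -
  have "x + a - \<epsilon> = (x - \<epsilon>) + a" "x + a + \<epsilon> = (x + \<epsilon>) + a"
    "y + b - \<epsilon> = (y - \<epsilon>) + b" "y + b + \<epsilon> = (y + \<epsilon>) + b"
    by simp_all
  then show ?thesis
    unfolding upwind_rhs_def by (simp only: assms fst_conv snd_conv)
qed

lemma abs_upwind_rhs_le:
  assumes "0 < \<epsilon>" and U: "\<And>p. \<bar>U p\<bar> \<le> B" and V: "\<And>p. \<bar>V p\<bar> \<le> B" and Y: "\<And>p. \<bar>Y p\<bar> \<le> m"
  shows "\<bar>upwind_rhs \<epsilon> Y U V x y\<bar> \<le> 6 * B / \<epsilon> * m"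
proof -
  have prod: "\<bar>Y q * w\<bar> \<le> m * B" if "\<bar>w\<bar> \<le> B" for q w
    unfolding abs_mult using Y[of q] that by (intro mult_mono) auto
  have U': "\<bar>max 0 (U p)\<bar> \<le> B" "\<bar>max 0 (- U p)\<bar> \<le> B" "\<bar>\<bar>U p\<bar>\<bar> \<le> B" for p
    using U[of p] by auto
  have V': "\<bar>max 0 (V p)\<bar> \<le> B" "\<bar>max 0 (- V p)\<bar> \<le> B" "\<bar>\<bar>V p\<bar>\<bar> \<le> B" for p
    using V[of p] by auto
  have "\<epsilon> * upwind_rhs \<epsilon> Y U V x y
      = Y (x - \<epsilon>, y) * max 0 (U (x - \<epsilon>, y)) - Y (x, y) * \<bar>U (x, y)\<bar>
      + Y (x + \<epsilon>, y) * max 0 (- U (x + \<epsilon>, y)) + Y (x, y - \<epsilon>) * max 0 (V (x, y - \<epsilon>))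
      - Y (x, y) * \<bar>V (x, y)\<bar> + Y (x, y + \<epsilon>) * max 0 (- V (x, y + \<epsilon>))"
    using \<open>0 < \<epsilon>\<close> by (simp add: upwind_rhs_def)
  moreover note prod[OF U'(1)[of "(x - \<epsilon>, y)"], of "(x - \<epsilon>, y)"] prod[OF U'(3)[of "(x, y)"], of "(x, y)"]
    prod[OF U'(2)[of "(x + \<epsilon>, y)"], of "(x + \<epsilon>, y)"] prod[OF V'(1)[of "(x, y - \<epsilon>)"], of "(x, y - \<epsilon>)"]
    prod[OF V'(3)[of "(x, y)"], of "(x, y)"] prod[OF V'(2)[of "(x, y + \<epsilon>)"], of "(x, y + \<epsilon>)"]
  ultimately have "\<bar>\<epsilon> * upwind_rhs \<epsilon> Y U V x y\<bar> \<le> 6 * (m * B)"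
    unfolding abs_le_iff by linarith
  then show ?thesis
    using \<open>0 < \<epsilon>\<close> by (simp add: abs_mult field_simps)
qed

text \<open>Under the CFL condition the Euler step is a convex combination of values of X.\<close>
lemma abs_euler_step_upwind_le:
  assumes "0 < \<epsilon>" "0 \<le> h" and cfl: "h * (\<bar>U (x, y)\<bar> + \<bar>V (x, y)\<bar>) \<le> \<epsilon>"
  shows "\<bar>X (x, y) + h * upwind_rhs \<epsilon> X U V x y\<bar>
       \<le> \<bar>X (x, y)\<bar> + h * upwind_rhs \<epsilon> (\<lambda>p. \<bar>X p\<bar>) U V x y"
proof -
  define k where "k = h / \<epsilon>"
  define c where "c = 1 - k * (\<bar>U (x, y)\<bar> + \<bar>V (x, y)\<bar>)"
  have k: "0 \<le> k" and c: "0 \<le> c"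
    using assms by (simp_all add: k_def c_def field_simps)
  define A1 where "A1 = X (x - \<epsilon>, y) * max 0 (U (x - \<epsilon>, y))"
  define A2 where "A2 = X (x + \<epsilon>, y) * max 0 (- U (x + \<epsilon>, y))"
  define A3 where "A3 = X (x, y - \<epsilon>) * max 0 (V (x, y - \<epsilon>))"
  define A4 where "A4 = X (x, y + \<epsilon>) * max 0 (- V (x, y + \<epsilon>))"
  have "X (x, y) + h * upwind_rhs \<epsilon> X U V x y = c * X (x, y) + k * (A1 + A2 + A3 + A4)"
    using assms by (simp add: upwind_rhs_def c_def k_def A1_def A2_def A3_def A4_def field_simps)
  also have "\<bar>\<dots>\<bar> \<le> c * \<bar>X (x, y)\<bar> + k * (\<bar>A1\<bar> + \<bar>A2\<bar> + \<bar>A3\<bar> + \<bar>A4\<bar>)"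
    using k c by (simp add: abs_mult abs_triangle_ineq order_trans[OF abs_triangle_ineq]
        add_mono mult_left_mono)
  also have "\<dots> = \<bar>X (x, y)\<bar> + h * upwind_rhs \<epsilon> (\<lambda>p. \<bar>X p\<bar>) U V x y"
    using assms
    by (simp add: upwind_rhs_def c_def k_def A1_def A2_def A3_def A4_def abs_mult field_simps)
  finally show ?thesis .
qed

text \<open>The right-hand side is a sum of differences of translates (flux form).\<close>
lemma integral_upwind_rhs_periodic:
  assumes cY: "continuous_on UNIV Y" and cU: "continuous_on UNIV U" and cV: "continuous_on UNIV V"
    and pY: "periodic2 Y" and pU: "periodic2 U" and pV: "periodic2 V"
  shows "integral period_cell (\<lambda>p. upwind_rhs \<epsilon> Y U V (fst p) (snd p)) = 0"
proof -
  define F1 where "F1 p = Y p * max 0 (U p)" for p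
  define F2 where "F2 p = Y p * max 0 (- U p)" for p
  define F3 where "F3 p = Y p * max 0 (V p)" for p
  define F4 where "F4 p = Y p * max 0 (- V p)" for p
  have cF: "continuous_on UNIV F1" "continuous_on UNIV F2" "continuous_on UNIV F3" "continuous_on UNIV F4"
    unfolding F1_def F2_def F3_def F4_def by (intro continuous_intros cY cU cV)+
  have pF: "periodic2 F1" "periodic2 F2" "periodic2 F3" "periodic2 F4"
    using pY pU pV by (simp_all add: periodic2_def F1_def F2_def F3_def F4_def)
  have abs_split: "\<bar>w\<bar> = max 0 w + max 0 (- w)" for w :: real by linarith
  define D where "D F c p = F (p - c) - F p" for F :: "real \<times> real \<Rightarrow> real" and c p
  have "upwind_rhs \<epsilon> Y U V x y
      = (1 / \<epsilon>) * (D F1 (\<epsilon>, 0) (x, y) + D F2 (- \<epsilon>, 0) (x, y) + D F3 (0, \<epsilon>) (x, y) + D F4 (0, - \<epsilon>) (x, y))"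
    for x y
    unfolding upwind_rhs_def D_def F1_def F2_def F3_def F4_def abs_split[of "U (x, y)"]
      abs_split[of "V (x, y)"]
    by (simp add: ring_distribs)
  then have "(\<lambda>p. upwind_rhs \<epsilon> Y U V (fst p) (snd p))
      = (\<lambda>p. (1 / \<epsilon>) * (D F1 (\<epsilon>, 0) p + D F2 (- \<epsilon>, 0) p + D F3 (0, \<epsilon>) p + D F4 (0, - \<epsilon>) p))"
    by simp
  moreover have "((\<lambda>p. (1 / \<epsilon>) * (D F1 (\<epsilon>, 0) p + D F2 (- \<epsilon>, 0) p + D F3 (0, \<epsilon>) p + D F4 (0, - \<epsilon>) p))
      has_integral 0) period_cell"
    unfolding D_def
    using has_integral_mult_right[OF has_integral_add[OF has_integral_add[OF has_integral_add[OF
        has_integral_periodic2_translate_diff[OF cF(1) pF(1)]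
        has_integral_periodic2_translate_diff[OF cF(2) pF(2)]]
        has_integral_periodic2_translate_diff[OF cF(3) pF(3)]]
        has_integral_periodic2_translate_diff[OF cF(4) pF(4)]], of "1 / \<epsilon>"]
    by simp
  ultimately show ?thesis by (metis integral_unique)
qed

lemma integral_abs_euler_step_upwind_le:
  fixes X U V :: "real \<times> real \<Rightarrow> real"
  assumes "0 < \<epsilon>" "0 \<le> h" and U: "\<And>p. \<bar>U p\<bar> \<le> B" and V: "\<And>p. \<bar>V p\<bar> \<le> B"
    and cfl: "h * (2 * B) \<le> \<epsilon>"
    and cX: "continuous_on UNIV X" and cU: "continuous_on UNIV U" and cV: "continuous_on UNIV V"
    and pX: "periodic2 X" and pU: "periodic2 U" and pV: "periodic2 V"
  shows "integral period_cell (\<lambda>p. \<bar>X p + h * upwind_rhs \<epsilon> X U V (fst p) (snd p)\<bar>)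
       \<le> integral period_cell (\<lambda>p. \<bar>X p\<bar>)"
proof -
  have cabsX: "continuous_on UNIV (\<lambda>p. \<bar>X p\<bar>)" by (intro continuous_intros cX)
  have pabsX: "periodic2 (\<lambda>p. \<bar>X p\<bar>)" using pX by (simp add: periodic2_def)
  have rhs_int: "(\<lambda>p. upwind_rhs \<epsilon> Y U V (fst p) (snd p)) integrable_on period_cell"
    if "continuous_on UNIV Y" for Y
    by (rule integrable_on_cbox_if_continuous[OF continuous_on_upwind_rhs[OF that cU cV]])
  have "integral period_cell (\<lambda>p. \<bar>X p + h * upwind_rhs \<epsilon> X U V (fst p) (snd p)\<bar>)
      \<le> integral period_cell (\<lambda>p. \<bar>X p\<bar> + h * upwind_rhs \<epsilon> (\<lambda>p. \<bar>X p\<bar>) U V (fst p) (snd p))"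
  proof (rule integral_le)
    show "(\<lambda>p. \<bar>X p + h * upwind_rhs \<epsilon> X U V (fst p) (snd p)\<bar>) integrable_on period_cell"
      by (intro integrable_on_cbox_if_continuous continuous_intros cX continuous_on_upwind_rhs[OF cX cU cV])
    show "(\<lambda>p. \<bar>X p\<bar> + h * upwind_rhs \<epsilon> (\<lambda>p. \<bar>X p\<bar>) U V (fst p) (snd p)) integrable_on period_cell"
      using integrable_add[OF integrable_on_cbox_if_continuous[OF cabsX] integrable_on_cmult_left[OF rhs_int[OF cabsX], of h]]
      by simp
    fix p :: "real \<times> real"
    have "h * (\<bar>U p\<bar> + \<bar>V p\<bar>) \<le> h * (2 * B)"
      using U[of p] V[of p] \<open>0 \<le> h\<close> by (intro mult_left_mono) auto
    then show "\<bar>X p + h * upwind_rhs \<epsilon> X U V (fst p) (snd p)\<bar>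
        \<le> \<bar>X p\<bar> + h * upwind_rhs \<epsilon> (\<lambda>p. \<bar>X p\<bar>) U V (fst p) (snd p)"
      using abs_euler_step_upwind_le[of \<epsilon> h U "fst p" "snd p" V X] assms(1,2) cfl by simp
  qed
  also have "\<dots> = integral period_cell (\<lambda>p. \<bar>X p\<bar>)
      + h * integral period_cell (\<lambda>p. upwind_rhs \<epsilon> (\<lambda>p. \<bar>X p\<bar>) U V (fst p) (snd p))"
    using integrable_on_cmult_left[OF rhs_int[OF cabsX], of h]
    by (simp add: integral_add integrable_on_cbox_if_continuous[OF cabsX] rhs_int[OF cabsX])
  also have "\<dots> = integral period_cell (\<lambda>p. \<bar>X p\<bar>)"
    by (simp add: integral_upwind_rhs_periodic[OF cabsX cU cV pabsX pU pV])
  finally show ?thesis .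
qed

section \<open>Comparison arguments in time\<close>

lemma le_linear_bound_by_right_increments:
  fixes N :: "real \<Rightarrow> real"
  assumes cont: "continuous_on {0..T} N" and "0 \<le> T"
    and incr: "\<And>t. 0 \<le> t \<Longrightarrow> t < T \<Longrightarrow> \<exists>h0>0. \<forall>h. 0 < h \<and> h < h0 \<longrightarrow> N (t + h) \<le> N t + \<eta> * h"
  shows "N T \<le> N 0 + \<eta> * T"
proof -
  define A where "A = {s \<in> {0..T}. N s \<le> N 0 + \<eta> * s}"
  have "closed A"
    unfolding A_def by (rule continuous_on_closed_Collect_le[OF cont]) (auto intro!: continuous_intros)
  moreover have "0 \<in> A" and bdd: "bdd_above A"
    using \<open>0 \<le> T\<close> by (auto simp: A_def intro: bdd_aboveI[where M=T])
  ultimately have "Sup A \<in> A" using closed_contains_Sup by blast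
  define s where "s = Sup A"
  show ?thesis
  proof (rule ccontr)
    assume "\<not> ?thesis"
    with \<open>Sup A \<in> A\<close> have s: "0 \<le> s" "s < T" "N s \<le> N 0 + \<eta> * s"
      by (auto simp: A_def le_less s_def)
    obtain h0 where "h0 > 0" and h0: "\<And>h. 0 < h \<and> h < h0 \<Longrightarrow> N (s + h) \<le> N s + \<eta> * h"
      using incr[OF s(1,2)] by blast
    define h where "h = min (h0 / 2) (T - s)"
    have h: "0 < h" "h < h0" "s + h \<le> T"
      using \<open>h0 > 0\<close> s by (auto simp: h_def)
    then have "N (s + h) \<le> N 0 + \<eta> * (s + h)"
      using h0[of h] s(3) by (simp add: algebra_simps)
    then have "s + h \<in> A"
      using h s by (simp add: A_def)
    then show False
      using cSup_upper[OF _ bdd, of "s + h"] h by (simp add: s_def)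
  qed
qed

lemma le_initial_by_right_increments:
  fixes N :: "real \<Rightarrow> real"
  assumes cont: "continuous_on {0..T} N" and "0 \<le> T"
    and incr: "\<And>t \<eta>. 0 \<le> t \<Longrightarrow> t < T \<Longrightarrow> 0 < \<eta> \<Longrightarrow>
                 \<exists>h0>0. \<forall>h. 0 < h \<and> h < h0 \<longrightarrow> N (t + h) \<le> N t + \<eta> * h"
  shows "N T \<le> N 0"
proof (rule field_le_epsilon)
  fix e :: real assume "0 < e"
  then have "N T \<le> N 0 + e / (T + 1) * T"
    using \<open>0 \<le> T\<close> by (intro le_linear_bound_by_right_increments[OF cont] incr) auto
  also have "e / (T + 1) * T \<le> e"
    using \<open>0 < e\<close> \<open>0 \<le> T\<close> by (simp add: field_simps)
  finally show "N T \<le> N 0 + e" by simp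
qed

lemma halve_bound_by_derivative_bound:
  fixes y y' :: "'q \<Rightarrow> real \<Rightarrow> real"
  assumes deriv: "\<And>q t. s \<le> t \<Longrightarrow> t \<le> s + h \<Longrightarrow> (y q has_field_derivative y' q t) (at t within {s..s + h})"
    and bnd: "\<And>t q. s \<le> t \<Longrightarrow> t \<le> s + h \<Longrightarrow> (\<forall>r. \<bar>y r t\<bar> \<le> m) \<Longrightarrow> \<bar>y' q t\<bar> \<le> K * m"
    and start: "\<And>q. y q s = 0" and "0 \<le> K" "K * h \<le> 1 / 2"
    and m: "\<And>q t. s \<le> t \<Longrightarrow> t \<le> s + h \<Longrightarrow> \<bar>y q t\<bar> \<le> m"
    and t: "s \<le> t" "t \<le> s + h"
  shows "\<bar>y q t\<bar> \<le> m / 2"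
proof -
  have "0 \<le> m" using m[of s] t by (simp add: start)
  have "norm (y q t - y q s) \<le> K * m * norm (t - s)"
  proof (rule field_differentiable_bound[where S="{s..t}"])
    show "(y q has_field_derivative y' q z) (at z within {s..t})" if "z \<in> {s..t}" for z
      using deriv[of z q] that t by (auto intro: has_field_derivative_subset)
    show "norm (y' q z) \<le> K * m" if "z \<in> {s..t}" for z
      using bnd[of z q] m that t by auto
  qed (use t in auto)
  also have "\<dots> \<le> K * m * h"
    using t \<open>0 \<le> K\<close> \<open>0 \<le> m\<close> by (intro mult_left_mono) auto
  also have "\<dots> \<le> m / 2"
    using \<open>K * h \<le> 1 / 2\<close> \<open>0 \<le> m\<close> mult_right_mono[of "K * h" "1 / 2" m] by (simp add: algebra_simps)
  finally show ?thesis by (simp add: start)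
qed

lemma zero_by_derivative_bound_on_interval:
  fixes y y' :: "'q \<Rightarrow> real \<Rightarrow> real"
  assumes deriv: "\<And>q t. s \<le> t \<Longrightarrow> t \<le> s + h \<Longrightarrow> (y q has_field_derivative y' q t) (at t within {s..s + h})"
    and bnd: "\<And>t m q. s \<le> t \<Longrightarrow> t \<le> s + h \<Longrightarrow> (\<forall>r. \<bar>y r t\<bar> \<le> m) \<Longrightarrow> \<bar>y' q t\<bar> \<le> K * m"
    and start: "\<And>q. y q s = 0" and "0 \<le> K" "K * h \<le> 1 / 2"
    and M: "\<And>q t. s \<le> t \<Longrightarrow> t \<le> s + h \<Longrightarrow> \<bar>y q t\<bar> \<le> M"
    and t: "s \<le> t" "t \<le> s + h"
  shows "y q t = 0"
proof -
  have halving: "\<bar>y q t\<bar> \<le> M / 2 ^ n" if "s \<le> t" "t \<le> s + h" for n q t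
    using that
  proof (induction n arbitrary: q t)
    case (Suc n)
    then show ?case
      using halve_bound_by_derivative_bound[OF deriv bnd start \<open>0 \<le> K\<close> \<open>K * h \<le> 1 / 2\<close>,
          where m="M / 2 ^ n" and q=q and t=t]
      by (simp add: ac_simps)
  qed (use M in simp)
  have "\<bar>y q t\<bar> \<le> 0"
  proof (rule field_le_epsilon)
    fix e :: real assume "0 < e"
    obtain n where "M / e < 2 ^ n" using real_arch_pow[of 2 "M / e"] by auto
    then have "M / 2 ^ n < e" using \<open>0 < e\<close> by (simp add: field_simps)
    then show "\<bar>y q t\<bar> \<le> 0 + e" using halving[OF t, where n=n and q=q] by simp
  qed
  then show ?thesis by simp
qed

lemma zero_by_derivative_bound:
  fixes y y' :: "'q \<Rightarrow> real \<Rightarrow> real"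
  assumes deriv: "\<And>q t. 0 \<le> t \<Longrightarrow> (y q has_field_derivative y' q t) (at t within {0..})"
    and bnd: "\<And>t m q. 0 \<le> t \<Longrightarrow> (\<forall>r. \<bar>y r t\<bar> \<le> m) \<Longrightarrow> \<bar>y' q t\<bar> \<le> K * m"
    and init: "\<And>q. y q 0 = 0"
    and bdd: "\<And>T. \<exists>M. \<forall>q t. 0 \<le> t \<and> t \<le> T \<longrightarrow> \<bar>y q t\<bar> \<le> M"
    and "0 \<le> K" "0 \<le> t"
  shows "y q t = 0"
proof -
  define h where "h = 1 / (2 * K + 2)"
  have h: "0 < h" "K * h \<le> 1 / 2" using \<open>0 \<le> K\<close> by (auto simp: h_def field_simps)
  have "\<forall>q t. 0 \<le> t \<and> t \<le> real j * h \<longrightarrow> y q t = 0" for j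
  proof (induction j)
    case 0
    then show ?case using init by auto
  next
    case (Suc j)
    define s where "s = real j * h"
    have "0 \<le> s" using h by (simp add: s_def)
    obtain M where M: "\<forall>q t. 0 \<le> t \<and> t \<le> s + h \<longrightarrow> \<bar>y q t\<bar> \<le> M" using bdd by blast
    have deriv': "(y q has_field_derivative y' q t) (at t within {s..s + h})" if "s \<le> t" for q t
      using deriv[of t q] \<open>0 \<le> s\<close> that by (auto intro: has_field_derivative_subset)
    have "y q t = 0" if "s \<le> t" "t \<le> s + h" for q t
      using zero_by_derivative_bound_on_interval[where K=K and M=M, OF deriv' bnd _ \<open>0 \<le> K\<close> h(2) _ that]
        \<open>0 \<le> s\<close> Suc.IH M by (auto simp: s_def)
    then show ?case
      using Suc.IH by (metis linear of_nat_Suc distrib_right mult_1 add.commute s_def)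
  qed
  moreover obtain j where "t / h \<le> real j" using real_arch_simple by blast
  then have "t \<le> real j * h" using h by (simp add: field_simps)
  ultimately show ?thesis using \<open>0 \<le> t\<close> by blast
qed

section \<open>Solutions of the upwind scheme\<close>

lemma bounded_linear_apply_bcontfun:
  "bounded_linear (\<lambda>f :: 'a::topological_space \<Rightarrow>\<^sub>C real. f p)"
  by (rule bounded_linear_intro[where K=1]) (auto, metis norm_bounded real_norm_def)

lemma L1_cell_dist_le:
  fixes f g :: "(real \<times> real) \<Rightarrow>\<^sub>C real"
  shows "dist (integral period_cell (\<lambda>p. \<bar>f p\<bar>)) (integral period_cell (\<lambda>p. \<bar>g p\<bar>))
       \<le> Henstock_Kurzweil_Integration.content period_cell * dist f g"
proof -
  have int: "(\<lambda>p. \<bar>h p\<bar>) integrable_on period_cell" for h :: "(real \<times> real) \<Rightarrow>\<^sub>C real"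
    by (intro integrable_continuous continuous_intros continuous_on_apply_bcontfun)
  have "norm (integral period_cell (\<lambda>p. \<bar>f p\<bar> - \<bar>g p\<bar>)) \<le> dist f g * Henstock_Kurzweil_Integration.content period_cell"
  proof (rule has_integral_bound[OF zero_le_dist])
    show "((\<lambda>p. \<bar>f p\<bar> - \<bar>g p\<bar>) has_integral integral period_cell (\<lambda>p. \<bar>f p\<bar> - \<bar>g p\<bar>)) period_cell"
      by (intro integrable_integral integrable_diff int)
    show "norm (\<bar>f p\<bar> - \<bar>g p\<bar>) \<le> dist f g" for p
      using dist_bounded[of f p g] by (simp add: dist_real_def)
  qed
  then show ?thesis
    by (simp add: dist_real_def mult.commute integral_diff[OF int int])
qed

lemma bounded_on_interval_if_continuous_on:
  fixes X :: "real \<Rightarrow> 'a::real_normed_vector"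
  assumes "continuous_on {0..} X"
  obtains M where "\<And>t. 0 \<le> t \<Longrightarrow> t \<le> T \<Longrightarrow> norm (X t) \<le> M"
proof -
  have "compact (X ` {0..T})"
    by (rule compact_continuous_image[OF continuous_on_subset[OF assms]]) auto
  then obtain M where "\<forall>z\<in>X ` {0..T}. norm z \<le> M"
    using compact_imp_bounded bounded_iff by metis
  then show ?thesis by (intro that) auto
qed

locale upwind_solution =
  fixes \<epsilon> B :: real and X X' u v :: "real \<Rightarrow> (real \<times> real) \<Rightarrow>\<^sub>C real"
  assumes eps_pos: "0 < \<epsilon>"
    and has_derivative: "\<And>t. 0 \<le> t \<Longrightarrow> (X has_vector_derivative X' t) (at t within {0..})"
    and equation: "\<And>t x y. 0 \<le> t \<Longrightarrow> X' t (x, y) = upwind_rhs \<epsilon> (X t) (u t) (v t) x y"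
    and u_bound: "\<And>t p. 0 \<le> t \<Longrightarrow> \<bar>u t p\<bar> \<le> B"
    and v_bound: "\<And>t p. 0 \<le> t \<Longrightarrow> \<bar>v t p\<bar> \<le> B"
    and u_periodic: "\<And>t. 0 \<le> t \<Longrightarrow> periodic2 (u t)"
    and v_periodic: "\<And>t. 0 \<le> t \<Longrightarrow> periodic2 (v t)"
begin

lemma solution_continuous: "continuous_on {0..} X"
  by (rule continuous_on_vector_derivative[OF has_derivative]) simp

lemma B_nonneg: "0 \<le> B"
  using u_bound[of 0 0] by simp

text \<open>The difference of X and its translate solves the same linear equation with zero initial
  value, so it vanishes.\<close>
lemma translation_invariant:
  assumes u_inv: "\<And>t x y. 0 \<le> t \<Longrightarrow> u t (x + a, y + b) = u t (x, y)"
    and v_inv: "\<And>t x y. 0 \<le> t \<Longrightarrow> v t (x + a, y + b) = v t (x, y)"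
    and X0_inv: "\<And>x y. X 0 (x + a, y + b) = X 0 (x, y)"
    and "0 \<le> t"
  shows "X t (x + a, y + b) = X t (x, y)"
proof -
  define Y where "Y q s = X s (fst q + a, snd q + b) - X s q" for q s
  define Y' where "Y' q s = X' s (fst q + a, snd q + b) - X' s q" for q s
  have "Y (x, y) t = 0"
  proof (rule zero_by_derivative_bound[where K="6 * B / \<epsilon>" and y=Y and y'=Y'])
    show "(Y q has_field_derivative Y' q s) (at s within {0..})" if "0 \<le> s" for q s
      unfolding has_real_derivative_iff_has_vector_derivative Y_def Y'_def
      by (intro has_vector_derivative_diff
          bounded_linear.has_vector_derivative[OF bounded_linear_apply_bcontfun has_derivative[OF that]])
    show "\<bar>Y' q s\<bar> \<le> 6 * B / \<epsilon> * m" if "0 \<le> s" and m: "\<forall>r. \<bar>Y r s\<bar> \<le> m" for s m q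
    proof -
      have "Y' q s = upwind_rhs \<epsilon> (\<lambda>p. Y p s) (u s) (v s) (fst q) (snd q)"
        using equation[OF \<open>0 \<le> s\<close>, of "fst q + a" "snd q + b"] equation[OF \<open>0 \<le> s\<close>, of "fst q" "snd q"]
          upwind_rhs_translate[OF u_inv[OF \<open>0 \<le> s\<close>] v_inv[OF \<open>0 \<le> s\<close>], of \<epsilon> "X s" "fst q" "snd q"]
        by (simp add: Y_def Y'_def upwind_rhs_diff)
      also have "\<bar>\<dots>\<bar> \<le> 6 * B / \<epsilon> * m"
        using eps_pos u_bound v_bound \<open>0 \<le> s\<close> m by (intro abs_upwind_rhs_le) auto
      finally show ?thesis .
    qed
    show "Y q 0 = 0" for q
      using X0_inv[of "fst q" "snd q"] by (simp add: Y_def)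
    show "\<exists>M. \<forall>q s. 0 \<le> s \<and> s \<le> T \<longrightarrow> \<bar>Y q s\<bar> \<le> M" for T
    proof -
      obtain M where M: "\<And>s. 0 \<le> s \<Longrightarrow> s \<le> T \<Longrightarrow> norm (X s) \<le> M"
        using bounded_on_interval_if_continuous_on[OF solution_continuous] by blast
      have "\<bar>Y q s\<bar> \<le> 2 * M" if "0 \<le> s" "s \<le> T" for q s
        using norm_bounded[of "X s" "(fst q + a, snd q + b)"] norm_bounded[of "X s" q] M[OF that]
        unfolding Y_def by simp
      then show ?thesis by blast
    qed
  qed (use B_nonneg eps_pos \<open>0 \<le> t\<close> in auto)
  then show ?thesis by (simp add: Y_def)
qed

lemma periodic:
  assumes "periodic2 (X 0)" "0 \<le> t"
  shows "periodic2 (X t)"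
  using assms u_periodic v_periodic
    translation_invariant[where a="2*pi" and b=0] translation_invariant[where a=0 and b="2*pi"]
  by (simp add: periodic2_def)

lemma L1_euler_step_le:
  assumes "periodic2 (X t)" "0 \<le> t" "0 \<le> h" "h * (2 * B) \<le> \<epsilon>"
  shows "integral period_cell (\<lambda>p. \<bar>X t p + h * X' t p\<bar>) \<le> integral period_cell (\<lambda>p. \<bar>X t p\<bar>)"
proof -
  have "X' t p = upwind_rhs \<epsilon> (X t) (u t) (v t) (fst p) (snd p)" for p
    using equation[OF \<open>0 \<le> t\<close>, of "fst p" "snd p"] by simp
  then show ?thesis
    using integral_abs_euler_step_upwind_le[OF eps_pos \<open>0 \<le> h\<close> u_bound[OF \<open>0 \<le> t\<close>]
        v_bound[OF \<open>0 \<le> t\<close>] \<open>h * (2 * B) \<le> \<epsilon>\<close> continuous_on_apply_bcontfun continuous_on_apply_bcontfun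
        continuous_on_apply_bcontfun assms(1) u_periodic[OF \<open>0 \<le> t\<close>] v_periodic[OF \<open>0 \<le> t\<close>]]
    by simp
qed

lemma L1_right_increment:
  assumes "periodic2 (X t)" "0 \<le> t" "0 < \<eta>"
  shows "\<exists>h0>0. \<forall>h. 0 < h \<and> h < h0 \<longrightarrow>
           integral period_cell (\<lambda>p. \<bar>X (t + h) p\<bar>) \<le> integral period_cell (\<lambda>p. \<bar>X t p\<bar>) + \<eta> * h"
proof -
  define C where "C = Henstock_Kurzweil_Integration.content period_cell"
  have "0 \<le> C" by (simp add: C_def)
  define e where "e = \<eta> / (C + 1)"
  have "0 < e" "e * C \<le> \<eta>"
    using \<open>0 < \<eta>\<close> \<open>0 \<le> C\<close> by (simp_all add: e_def field_simps)
  obtain d where "0 < d" and d: "\<And>s. s \<in> {0..} \<Longrightarrow> norm (s - t) < d \<Longrightarrow>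
      norm (X s - X t - (s - t) *\<^sub>R X' t) \<le> e * norm (s - t)"
    using has_derivative[OF \<open>0 \<le> t\<close>] \<open>0 < e\<close>
    unfolding has_vector_derivative_def has_derivative_within_alt by blast
  define h0 where "h0 = min d (\<epsilon> / (2 * B + 1))"
  have "integral period_cell (\<lambda>p. \<bar>X (t + h) p\<bar>) \<le> integral period_cell (\<lambda>p. \<bar>X t p\<bar>) + \<eta> * h"
    if "0 < h" "h < h0" for h
  proof -
    have "dist (X (t + h)) (X t + h *\<^sub>R X' t) \<le> e * h"
      using d[of "t + h"] that \<open>0 \<le> t\<close> by (simp add: h0_def dist_norm algebra_simps)
    then have "C * dist (X (t + h)) (X t + h *\<^sub>R X' t) \<le> C * (e * h)"
      using \<open>0 \<le> C\<close> by (rule mult_left_mono)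
    then have "integral period_cell (\<lambda>p. \<bar>X (t + h) p\<bar>)
        \<le> integral period_cell (\<lambda>p. \<bar>X t p + h * X' t p\<bar>) + C * (e * h)"
      using L1_cell_dist_le[of "X (t + h)" "X t + h *\<^sub>R X' t"]
      by (simp add: C_def dist_real_def abs_le_iff)
    also have "\<dots> \<le> integral period_cell (\<lambda>p. \<bar>X t p\<bar>) + C * (e * h)"
    proof -
      have "h * (2 * B) \<le> h * (2 * B + 1)" using \<open>0 < h\<close> by simp
      also have "\<dots> \<le> \<epsilon>" using that B_nonneg eps_pos by (simp add: h0_def field_simps)
      finally show ?thesis
        using L1_euler_step_le[OF assms(1,2)] \<open>0 < h\<close> by simp
    qed
    also have "C * (e * h) \<le> \<eta> * h"
      using \<open>e * C \<le> \<eta>\<close> \<open>0 < h\<close> by (simp add: mult.assoc[symmetric] mult.commute[of C])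
    finally show ?thesis by simp
  qed
  moreover have "0 < h0" using \<open>0 < d\<close> eps_pos B_nonneg by (simp add: h0_def)
  ultimately show ?thesis by blast
qed

text \<open>The Euler step is an \<open>L\<^sup>1\<close> contraction, so the \<open>L\<^sup>1\<close> norm has nonpositive right
  upper derivative.\<close>
lemma L1_nonincreasing:
  assumes "periodic2 (X 0)" "0 \<le> T"
  shows "integral period_cell (\<lambda>p. \<bar>X T p\<bar>) \<le> integral period_cell (\<lambda>p. \<bar>X 0 p\<bar>)"
proof (rule le_initial_by_right_increments[where N="\<lambda>t. integral period_cell (\<lambda>p. \<bar>X t p\<bar>)"])
  have "continuous_on UNIV (\<lambda>f :: (real \<times> real) \<Rightarrow>\<^sub>C real. integral period_cell (\<lambda>p. \<bar>f p\<bar>))"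
    by (rule lipschitz_on_continuous_on[OF lipschitz_onI[OF L1_cell_dist_le]]) simp
  then show "continuous_on {0..T} (\<lambda>t. integral period_cell (\<lambda>p. \<bar>X t p\<bar>))"
    by (rule continuous_on_compose2[OF _ continuous_on_subset[OF solution_continuous]]) auto
qed (use assms periodic L1_right_increment in auto)

end

section \<open>Mollification\<close>

lemma compact_subset_square:
  assumes "compact K"
  obtains R where "0 < R" "K \<subseteq> square 0 R"
proof -
  obtain R where "0 < R" and R: "\<And>z. z \<in> K \<Longrightarrow> norm z \<le> R"
    using bounded_pos compact_imp_bounded[OF assms] by metis
  then have "K \<subseteq> square 0 R"
    by (auto intro: mem_square_if_norm_le)
  with \<open>0 < R\<close> show ?thesis by (rule that)
qed

lemma bounded_if_continuous_compact_support:
  fixes g :: "'a::topological_space \<Rightarrow> real"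
  assumes "continuous_on UNIV g" "compact K" "\<And>z. z \<notin> K \<Longrightarrow> g z = 0"
  obtains M where "\<And>z. \<bar>g z\<bar> \<le> M"
proof -
  have "compact (g ` K)"
    by (rule compact_continuous_image[OF continuous_on_subset[OF assms(1)] assms(2)]) simp
  then obtain M where M: "\<forall>w \<in> g ` K. norm w \<le> M"
    using compact_imp_bounded bounded_iff by blast
  have "\<bar>g z\<bar> \<le> max M 0" for z
    using M assms(3)[of z] by (cases "z \<in> K") auto
  then show ?thesis by (rule that)
qed

lemma smooth2_partials:
  assumes "smooth2 \<psi>"
  obtains \<psi>x \<psi>y where "\<And>z. (\<psi> has_derivative (\<lambda>h. fst h * \<psi>x z + snd h * \<psi>y z)) (at z)"
    "continuous_on UNIV \<psi>" "continuous_on UNIV \<psi>x" "continuous_on UNIV \<psi>y"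
proof -
  obtain S where "\<psi> \<in> S" and S: "\<forall>g\<in>S. \<exists>gx\<in>S. \<exists>gy\<in>S.
      \<forall>p. (g has_derivative (\<lambda>h. fst h * gx p + snd h * gy p)) (at p)"
    using assms unfolding smooth2_def by blast
  have cont: "continuous_on UNIV g" if "g \<in> S" for g
  proof -
    obtain gx gy where "\<And>p. (g has_derivative (\<lambda>h. fst h * gx p + snd h * gy p)) (at p)"
      using S \<open>g \<in> S\<close> by blast
    then show ?thesis
      by (intro continuous_at_imp_continuous_on ballI has_derivative_continuous)
  qed
  from S \<open>\<psi> \<in> S\<close> obtain \<psi>x \<psi>y where "\<psi>x \<in> S" "\<psi>y \<in> S"
    "\<And>z. (\<psi> has_derivative (\<lambda>h. fst h * \<psi>x z + snd h * \<psi>y z)) (at z)"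
    by blast
  with that cont \<open>\<psi> \<in> S\<close> show ?thesis by blast
qed

lemma partials_vanish_outside_closure_support:
  fixes \<psi> \<psi>x \<psi>y :: "real \<times> real \<Rightarrow> real"
  assumes "\<And>z. (\<psi> has_derivative (\<lambda>h. fst h * \<psi>x z + snd h * \<psi>y z)) (at z)"
    and "z \<notin> closure {p. \<psi> p \<noteq> 0}"
  shows "\<psi>x z = 0" "\<psi>y z = 0"
proof -
  have vanish: "\<psi> x = 0" if "x \<in> - closure {p. \<psi> p \<noteq> 0}" for x
    using that subsetD[OF closure_subset, of x "{p. \<psi> p \<noteq> 0}"] by auto
  have "((\<lambda>_. 0) has_derivative (\<lambda>h. fst h * \<psi>x z + snd h * \<psi>y z)) (at z)"
    by (rule has_derivative_transform_within_open[OF assms(1) open_Compl[OF closed_closure] _ vanish])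
      (use assms(2) in simp_all)
  then have "(\<lambda>h. fst h * \<psi>x z + snd h * \<psi>y z) = (\<lambda>h. 0)"
    by (rule has_derivative_unique) (rule has_derivative_const)
  from fun_cong[OF this, of "(1, 0)"] fun_cong[OF this, of "(0, 1)"]
  show "\<psi>x z = 0" "\<psi>y z = 0" by simp_all
qed

lemma smooth2_compact_support_bounds:
  assumes "smooth2 \<psi>" and "compact (closure {p. \<psi> p \<noteq> 0})"
  obtains \<psi>x \<psi>y R \<Phi> where "\<And>z. (\<psi> has_derivative (\<lambda>h. fst h * \<psi>x z + snd h * \<psi>y z)) (at z)"
    "continuous_on UNIV \<psi>" "continuous_on UNIV \<psi>x" "continuous_on UNIV \<psi>y"
    "0 < R" "\<And>z. \<psi> z \<noteq> 0 \<Longrightarrow> z \<in> square 0 R"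
    "\<And>z. \<bar>\<psi> z\<bar> \<le> \<Phi>" "\<And>z. \<bar>\<psi>x z\<bar> \<le> \<Phi>" "\<And>z. \<bar>\<psi>y z\<bar> \<le> \<Phi>"
proof -
  define K where "K = closure {p. \<psi> p \<noteq> 0}"
  obtain \<psi>x \<psi>y where d: "\<And>z. (\<psi> has_derivative (\<lambda>h. fst h * \<psi>x z + snd h * \<psi>y z)) (at z)"
    and c: "continuous_on UNIV \<psi>" "continuous_on UNIV \<psi>x" "continuous_on UNIV \<psi>y"
    using smooth2_partials[OF assms(1)] by blast
  have vanish: "\<psi> z = 0" "\<psi>x z = 0" "\<psi>y z = 0" if "z \<notin> K" for z
    using that subsetD[OF closure_subset, of z "{p. \<psi> p \<noteq> 0}"]
      partials_vanish_outside_closure_support[OF d, of z]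
    by (auto simp: K_def)
  have "compact K" using assms(2) by (simp add: K_def)
  obtain M1 where "\<And>z. \<bar>\<psi> z\<bar> \<le> M1"
    using bounded_if_continuous_compact_support[OF c(1) \<open>compact K\<close> vanish(1)] by blast
  moreover obtain M2 where "\<And>z. \<bar>\<psi>x z\<bar> \<le> M2"
    using bounded_if_continuous_compact_support[OF c(2) \<open>compact K\<close> vanish(2)] by blast
  moreover obtain M3 where "\<And>z. \<bar>\<psi>y z\<bar> \<le> M3"
    using bounded_if_continuous_compact_support[OF c(3) \<open>compact K\<close> vanish(3)] by blast
  moreover obtain R where "0 < R" "K \<subseteq> square 0 R"
    using compact_subset_square[OF \<open>compact K\<close>] by blast
  moreover have "z \<in> K" if "\<psi> z \<noteq> 0" for z
    using vanish(1) that by blast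
  ultimately show ?thesis
    by (intro that[OF d c, of R "max M1 (max M2 M3)"]) (auto simp: le_max_iff_disj)
qed

lemma mollifier_eq: "mollifier \<delta> \<psi> p = \<psi> (p /\<^sub>R \<delta>) / \<delta>^2"
  by (cases p) (simp add: mollifier_def divide_inverse_commute)

lemma continuous_on_mollifier:
  assumes "continuous_on UNIV \<psi>"
  shows "continuous_on UNIV (mollifier \<delta> \<psi>)"
proof -
  have "mollifier \<delta> \<psi> = (\<lambda>p. \<psi> (inverse \<delta> *\<^sub>R p) * inverse (\<delta>^2))"
    by (simp add: fun_eq_iff mollifier_eq divide_inverse_commute)
  then show ?thesis
    by (simp, intro continuous_intros continuous_on_compose2[OF assms]) auto
qed

lemma mollifier_support:
  assumes supp: "\<And>z. \<psi> z \<noteq> 0 \<Longrightarrow> z \<in> square 0 R" and "0 < \<delta>" "\<delta> \<le> 1"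
    and "mollifier \<delta> \<psi> z \<noteq> 0"
  shows "z \<in> square 0 R"
proof -
  have "z /\<^sub>R \<delta> \<in> square 0 R"
    using assms(4) by (intro supp) (auto simp: mollifier_eq)
  then have "\<bar>fst z\<bar> / \<delta> \<le> R" "\<bar>snd z\<bar> / \<delta> \<le> R"
    using \<open>0 < \<delta>\<close> by (auto simp: mem_square abs_divide divide_inverse_commute)
  then have "\<bar>fst z\<bar> \<le> R * \<delta>" "\<bar>snd z\<bar> \<le> R * \<delta>" "0 \<le> R"
    using \<open>0 < \<delta>\<close> by (simp_all add: field_simps order_trans[OF divide_nonneg_pos[OF abs_ge_zero]])
  moreover have "R * \<delta> \<le> R" using \<open>0 \<le> R\<close> \<open>\<delta> \<le> 1\<close> by (simp add: mult_left_le)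
  ultimately show ?thesis by (auto simp: mem_square)
qed

lemma mollifier_line_has_derivative:
  assumes \<psi>d: "\<And>z. (\<psi> has_derivative (\<lambda>h. fst h * \<psi>x z + snd h * \<psi>y z)) (at z)" and "\<delta> \<noteq> 0"
  shows "((\<lambda>s. mollifier \<delta> \<psi> (a + s *\<^sub>R w)) has_field_derivative
           (fst w * \<psi>x ((a + s *\<^sub>R w) /\<^sub>R \<delta>) + snd w * \<psi>y ((a + s *\<^sub>R w) /\<^sub>R \<delta>)) / \<delta>^3)
         (at s within U)"
proof -
  let ?z = "(a + s *\<^sub>R w) /\<^sub>R \<delta>"
  have "((\<lambda>s. (a + s *\<^sub>R w) /\<^sub>R \<delta>) has_derivative (\<lambda>h. h *\<^sub>R (w /\<^sub>R \<delta>))) (at s within U)"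
    by (auto intro!: derivative_eq_intros simp: algebra_simps)
  from has_derivative_compose[OF this \<psi>d]
  have "((\<lambda>s. \<psi> ((a + s *\<^sub>R w) /\<^sub>R \<delta>)) has_field_derivative
      (fst w * \<psi>x ?z + snd w * \<psi>y ?z) / \<delta>) (at s within U)"
    unfolding has_field_derivative_def
    by (rule has_derivative_eq_rhs) (simp add: fun_eq_iff divide_inverse algebra_simps)
  then show ?thesis
    unfolding mollifier_eq using \<open>\<delta> \<noteq> 0\<close>
    by (auto intro!: derivative_eq_intros simp: power3_eq_cube power2_eq_square field_simps)
qed

lemma has_integral_reflect_translate_UNIV:
  fixes F :: "'a::euclidean_space \<Rightarrow> real"
  assumes "(F has_integral J) (cbox a b)" and vanish: "\<And>q. q \<notin> cbox a b \<Longrightarrow> F q = 0"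
  shows "((\<lambda>q. F (p - q)) has_integral J) UNIV"
proof -
  let ?S = "(\<lambda>x. (1 / (-1)) *\<^sub>R x + - ((1 / (-1)) *\<^sub>R p)) ` cbox a b"
  have "((\<lambda>q. F ((-1) *\<^sub>R q + p)) has_integral (1 / \<bar>-1\<bar> ^ DIM('a)) *\<^sub>R J) ?S"
    by (rule has_integral_affinity[OF assms(1)]) simp
  then have "((\<lambda>q. F (p - q)) has_integral J) ?S"
    by simp
  moreover have "F (p - q) = 0" if "q \<notin> ?S" for q
  proof (rule vanish, rule notI)
    assume "p - q \<in> cbox a b"
    then have "(1 / (-1)) *\<^sub>R (p - q) + - ((1 / (-1)) *\<^sub>R p) \<in> ?S" by (rule imageI)
    with that show False by simp
  qed
  ultimately show ?thesis
    by (rule has_integral_on_superset) simp_all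
qed

lemma conv2_eq_integral_square:
  fixes f m :: "real \<times> real \<Rightarrow> real"
  assumes cf: "continuous_on UNIV f" and cm: "continuous_on UNIV m"
    and supp: "\<And>z. m z \<noteq> 0 \<Longrightarrow> z \<in> square 0 R" and p: "p \<in> square c R"
  shows "conv2 f m p = integral (square c (2 * R)) (\<lambda>q. f q * m (p - q))"
proof -
  define F where "F q = f (p - q) * m q" for q
  have "continuous_on UNIV F"
    unfolding F_def by (intro continuous_intros continuous_on_compose2[OF cf] cm) auto
  then have hF: "(F has_integral integral (square 0 R) F) (square 0 R)"
    unfolding square_def by (intro integrable_integral integrable_on_cbox_if_continuous)
  have F0: "F q = 0" if "q \<notin> square 0 R" for q
    using supp[of q] that by (auto simp: F_def)
  have "((\<lambda>q. F (p - q)) has_integral integral (square 0 R) F) UNIV"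
    using hF F0 unfolding square_def by (rule has_integral_reflect_translate_UNIV)
  moreover have "(F has_integral integral (square 0 R) F) UNIV"
    using hF F0 by (rule has_integral_on_superset) simp_all
  ultimately have "((\<lambda>q. f q * m (p - q)) has_integral conv2 f m p) UNIV"
    unfolding conv2_def F_def[abs_def] by (simp add: integral_unique)
  moreover have "((\<lambda>q. f q * m (p - q)) has_integral integral (square c (2 * R)) (\<lambda>q. f q * m (p - q))) UNIV"
  proof (rule has_integral_on_superset)
    show "((\<lambda>q. f q * m (p - q)) has_integral integral (square c (2 * R)) (\<lambda>q. f q * m (p - q)))
        (square c (2 * R))"
      unfolding square_def
      by (intro integrable_integral integrable_on_cbox_if_continuous continuous_intros cf
          continuous_on_compose2[OF cm]) auto
    show "f q * m (p - q) = 0" if "q \<notin> square c (2 * R)" for q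
      using supp[of "p - q"] p that by (auto simp: mem_square)
  qed simp
  ultimately show ?thesis by (rule has_integral_unique)
qed

lemma abs_integral_mult_le:
  fixes f k :: "'a::euclidean_space \<Rightarrow> real"
  assumes "continuous_on UNIV f" "continuous_on UNIV k" "\<And>q. \<bar>k q\<bar> \<le> K"
  shows "\<bar>integral (cbox a b) (\<lambda>q. f q * k q)\<bar> \<le> K * integral (cbox a b) (\<lambda>q. \<bar>f q\<bar>)"
proof -
  have "norm (integral (cbox a b) (\<lambda>q. f q * k q)) \<le> integral (cbox a b) (\<lambda>q. \<bar>f q\<bar> * K)"
  proof (rule integral_norm_bound_integral)
    show "(\<lambda>q. f q * k q) integrable_on cbox a b" "(\<lambda>q. \<bar>f q\<bar> * K) integrable_on cbox a b"
      by (intro integrable_on_cbox_if_continuous continuous_intros assms)+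
    show "norm (f q * k q) \<le> \<bar>f q\<bar> * K" for q
      using assms(3)[of q] by (simp add: abs_mult mult_left_mono)
  qed
  then show ?thesis by (simp add: mult.commute)
qed

lemma conv2_mollifier_has_derivative:
  fixes f \<psi> \<psi>x \<psi>y :: "real \<times> real \<Rightarrow> real"
  assumes cf: "continuous_on UNIV f" and c\<psi>: "continuous_on UNIV \<psi>"
    and c\<psi>x: "continuous_on UNIV \<psi>x" and c\<psi>y: "continuous_on UNIV \<psi>y"
    and \<psi>d: "\<And>z. (\<psi> has_derivative (\<lambda>h. fst h * \<psi>x z + snd h * \<psi>y z)) (at z)"
    and supp: "\<And>z. \<psi> z \<noteq> 0 \<Longrightarrow> z \<in> square 0 R" and "0 < R" and "0 < \<delta>" "\<delta> \<le> 1"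
    and p: "p = c + s0 *\<^sub>R w"
  shows "((\<lambda>s. conv2 f (mollifier \<delta> \<psi>) (c + s *\<^sub>R w)) has_field_derivative
           integral (square p (2 * R))
             (\<lambda>q. f q * ((fst w * \<psi>x ((p - q) /\<^sub>R \<delta>) + snd w * \<psi>y ((p - q) /\<^sub>R \<delta>)) / \<delta>^3)))
         (at s0)"
proof -
  define U where "U = ball s0 (R / (norm w + 1))"
  define g where "g s q = f q * mollifier \<delta> \<psi> ((c - q) + s *\<^sub>R w)" for s q
  define g' where "g' s q = f q * ((fst w * \<psi>x (((c - q) + s *\<^sub>R w) /\<^sub>R \<delta>)
      + snd w * \<psi>y (((c - q) + s *\<^sub>R w) /\<^sub>R \<delta>)) / \<delta>^3)" for s q
  have "0 < norm w + 1"
    by (simp add: add_nonneg_pos)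
  then have "open U" "s0 \<in> U" "convex U"
    using \<open>0 < R\<close> by (simp_all add: U_def)
  have near: "c + s *\<^sub>R w \<in> square p R" if "s \<in> U" for s
  proof -
    have "norm (c + s *\<^sub>R w - p) = \<bar>s - s0\<bar> * norm w"
      by (simp add: p algebra_simps flip: scaleR_diff_left)
    also have "\<dots> \<le> R / (norm w + 1) * (norm w + 1)"
      using that by (intro mult_mono) (auto simp: U_def dist_real_def abs_minus_commute)
    finally show ?thesis
      using \<open>0 < norm w + 1\<close> by (intro mem_square_if_norm_le) simp
  qed
  have msupp: "z \<in> square 0 R" if "mollifier \<delta> \<psi> z \<noteq> 0" for z
    using mollifier_support[OF supp \<open>0 < \<delta>\<close> \<open>\<delta> \<le> 1\<close> that] .
  have conv_eq: "integral (square p (2 * R)) (g s) = conv2 f (mollifier \<delta> \<psi>) (c + s *\<^sub>R w)"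
    if "s \<in> U" for s
    using conv2_eq_integral_square[OF cf continuous_on_mollifier[OF c\<psi>, of \<delta>] msupp near[OF that]]
    by (simp add: g_def[abs_def] algebra_simps)
  have "((\<lambda>s. integral (square p (2 * R)) (g s)) has_field_derivative
      integral (square p (2 * R)) (g' s0)) (at s0 within U)"
    unfolding square_def
  proof (rule leibniz_rule_field_derivative[OF _ _ _ \<open>s0 \<in> U\<close> \<open>convex U\<close>])
    show "((\<lambda>s. g s q) has_field_derivative g' s q) (at s within U)" for s q
      using DERIV_cmult[OF mollifier_line_has_derivative[OF \<psi>d, of \<delta> "c - q" w s U], of "f q"]
        \<open>0 < \<delta>\<close>
      by (simp add: g_def g'_def)
    show "g s integrable_on cbox (p - (2 * R, 2 * R)) (p + (2 * R, 2 * R))" for s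
      unfolding g_def
      by (intro integrable_on_cbox_if_continuous continuous_intros cf
          continuous_on_compose2[OF continuous_on_mollifier[OF c\<psi>]]) auto
    show "continuous_on (U \<times> cbox (p - (2 * R, 2 * R)) (p + (2 * R, 2 * R))) (\<lambda>(s, q). g' s q)"
      unfolding g'_def case_prod_beta
      using \<open>0 < \<delta>\<close>
      by (intro continuous_intros continuous_on_compose2[OF cf] continuous_on_compose2[OF c\<psi>x]
          continuous_on_compose2[OF c\<psi>y]) auto
  qed
  then have "((\<lambda>s. integral (square p (2 * R)) (g s)) has_field_derivative
      integral (square p (2 * R)) (g' s0)) (at s0)"
    using at_within_open[OF \<open>s0 \<in> U\<close> \<open>open U\<close>] by simp
  then have "((\<lambda>s. conv2 f (mollifier \<delta> \<psi>) (c + s *\<^sub>R w)) has_field_derivative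
      integral (square p (2 * R)) (g' s0)) (at s0)"
    by (rule has_field_derivative_transform_within_open[OF _ \<open>open U\<close> \<open>s0 \<in> U\<close> conv_eq])
  moreover have "g' s0 = (\<lambda>q. f q * ((fst w * \<psi>x ((p - q) /\<^sub>R \<delta>) + snd w * \<psi>y ((p - q) /\<^sub>R \<delta>)) / \<delta>^3))"
    by (simp add: fun_eq_iff g'_def p algebra_simps)
  ultimately show ?thesis by simp
qed

lemma conv2_mollifier_estimates:
  fixes f \<psi> \<psi>x \<psi>y :: "real \<times> real \<Rightarrow> real"
  assumes cf: "continuous_on UNIV f" and c\<psi>: "continuous_on UNIV \<psi>"
    and c\<psi>x: "continuous_on UNIV \<psi>x" and c\<psi>y: "continuous_on UNIV \<psi>y"
    and \<psi>d: "\<And>z. (\<psi> has_derivative (\<lambda>h. fst h * \<psi>x z + snd h * \<psi>y z)) (at z)"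
    and supp: "\<And>z. \<psi> z \<noteq> 0 \<Longrightarrow> z \<in> square 0 R" and "0 < R"
    and \<Phi>: "\<And>z. \<bar>\<psi> z\<bar> \<le> \<Phi>" "\<And>z. \<bar>\<psi>x z\<bar> \<le> \<Phi>" "\<And>z. \<bar>\<psi>y z\<bar> \<le> \<Phi>"
    and "0 < \<delta>" "\<delta> \<le> 1"
    and M: "\<Phi> * integral (square (x, y) (2 * R)) (\<lambda>q. \<bar>f q\<bar>) \<le> M"
  defines "\<rho> \<equiv> conv2 f (mollifier \<delta> \<psi>)"
  shows "\<bar>\<rho> (x, y)\<bar> \<le> M / \<delta>^2"
    and "(\<lambda>s. \<rho> (s, y)) differentiable (at x)" "\<bar>deriv (\<lambda>s. \<rho> (s, y)) x\<bar> \<le> M / \<delta>^3"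
    and "(\<lambda>s. \<rho> (x, s)) differentiable (at y)" "\<bar>deriv (\<lambda>s. \<rho> (x, s)) y\<bar> \<le> M / \<delta>^3"
proof -
  have weighted: "\<bar>integral (square (x, y) (2 * R)) (\<lambda>q. f q * k q)\<bar> \<le> M / \<delta>^n"
    if "continuous_on UNIV k" "\<And>q. \<bar>k q\<bar> \<le> \<Phi> / \<delta>^n" for k n
  proof -
    have "\<bar>integral (square (x, y) (2 * R)) (\<lambda>q. f q * k q)\<bar>
        \<le> \<Phi> / \<delta>^n * integral (square (x, y) (2 * R)) (\<lambda>q. \<bar>f q\<bar>)"
      unfolding square_def by (rule abs_integral_mult_le[OF cf that])
    also have "\<dots> \<le> M / \<delta>^n"
      using M \<open>0 < \<delta>\<close> by (simp add: divide_right_mono)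
    finally show ?thesis .
  qed
  have msupp: "z \<in> square 0 R" if "mollifier \<delta> \<psi> z \<noteq> 0" for z
    using mollifier_support[OF supp \<open>0 < \<delta>\<close> \<open>\<delta> \<le> 1\<close> that] .
  have "\<rho> (x, y) = integral (square (x, y) (2 * R)) (\<lambda>q. f q * mollifier \<delta> \<psi> ((x, y) - q))"
    unfolding \<rho>_def
    using \<open>0 < R\<close> by (intro conv2_eq_integral_square[OF cf continuous_on_mollifier[OF c\<psi>] msupp])
      (auto simp: mem_square)
  also have "\<bar>\<dots>\<bar> \<le> M / \<delta>^2"
    using \<Phi>(1) \<open>0 < \<delta>\<close>
    by (intro weighted continuous_on_compose2[OF continuous_on_mollifier[OF c\<psi>]] continuous_intros)
      (auto simp: mollifier_eq abs_divide divide_right_mono)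
  finally show "\<bar>\<rho> (x, y)\<bar> \<le> M / \<delta>^2" .
  have along: "\<exists>D. ((\<lambda>s. \<rho> (c + s *\<^sub>R w)) has_field_derivative D) (at s0) \<and> \<bar>D\<bar> \<le> M / \<delta>^3"
    if "(x, y) = c + s0 *\<^sub>R w" and w: "w = (1, 0) \<or> w = (0, 1)" for c w s0
  proof (intro exI conjI)
    show "((\<lambda>s. \<rho> (c + s *\<^sub>R w)) has_field_derivative integral (square (x, y) (2 * R))
        (\<lambda>q. f q * ((fst w * \<psi>x (((x, y) - q) /\<^sub>R \<delta>) + snd w * \<psi>y (((x, y) - q) /\<^sub>R \<delta>)) / \<delta>^3)))
        (at s0)"
      unfolding \<rho>_def
      by (rule conv2_mollifier_has_derivative[OF cf c\<psi> c\<psi>x c\<psi>y \<psi>d supp \<open>0 < R\<close> \<open>0 < \<delta>\<close> \<open>\<delta> \<le> 1\<close> that(1)])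
    show "\<bar>integral (square (x, y) (2 * R))
        (\<lambda>q. f q * ((fst w * \<psi>x (((x, y) - q) /\<^sub>R \<delta>) + snd w * \<psi>y (((x, y) - q) /\<^sub>R \<delta>)) / \<delta>^3))\<bar>
        \<le> M / \<delta>^3"
      using w \<Phi>(2,3) \<open>0 < \<delta>\<close>
      by (intro weighted continuous_intros continuous_on_compose2[OF c\<psi>x] continuous_on_compose2[OF c\<psi>y])
        (auto simp: abs_divide divide_right_mono)
  qed
  obtain Dx where "((\<lambda>s. \<rho> (s, y)) has_field_derivative Dx) (at x)" "\<bar>Dx\<bar> \<le> M / \<delta>^3"
    using along[of "(0, y)" x "(1, 0)"] by auto
  then show "(\<lambda>s. \<rho> (s, y)) differentiable (at x)" "\<bar>deriv (\<lambda>s. \<rho> (s, y)) x\<bar> \<le> M / \<delta>^3"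
    by (auto intro: differentiableI[OF has_field_derivative_imp_has_derivative] simp: DERIV_imp_deriv)
  obtain Dy where "((\<lambda>s. \<rho> (x, s)) has_field_derivative Dy) (at y)" "\<bar>Dy\<bar> \<le> M / \<delta>^3"
    using along[of "(x, 0)" y "(0, 1)"] by auto
  then show "(\<lambda>s. \<rho> (x, s)) differentiable (at y)" "\<bar>deriv (\<lambda>s. \<rho> (x, s)) y\<bar> \<le> M / \<delta>^3"
    by (auto intro: differentiableI[OF has_field_derivative_imp_has_derivative] simp: DERIV_imp_deriv)
qed

lemma periodic_mollification_bounds:
  assumes "smooth2 \<psi>" and "compact (closure {p. \<psi> p \<noteq> 0})"
  obtains K where "0 \<le> K" "\<And>f \<delta> M x y. continuous_on UNIV f \<Longrightarrow> periodic2 f \<Longrightarrow> 0 < \<delta> \<Longrightarrow> \<delta> \<le> 1 \<Longrightarrow>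
      K * integral period_cell (\<lambda>q. \<bar>f q\<bar>) \<le> M \<Longrightarrow>
      let \<rho> = conv2 f (mollifier \<delta> \<psi>) in
        \<bar>\<rho> (x, y)\<bar> \<le> M / \<delta>^2
        \<and> (\<lambda>s. \<rho> (s, y)) differentiable (at x) \<and> \<bar>deriv (\<lambda>s. \<rho> (s, y)) x\<bar> \<le> M / \<delta>^3
        \<and> (\<lambda>s. \<rho> (x, s)) differentiable (at y) \<and> \<bar>deriv (\<lambda>s. \<rho> (x, s)) y\<bar> \<le> M / \<delta>^3"
proof -
  obtain \<psi>x \<psi>y R \<Phi> where \<psi>: "\<And>z. (\<psi> has_derivative (\<lambda>h. fst h * \<psi>x z + snd h * \<psi>y z)) (at z)"
    "continuous_on UNIV \<psi>" "continuous_on UNIV \<psi>x" "continuous_on UNIV \<psi>y"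
    and R: "0 < R" "\<And>z. \<psi> z \<noteq> 0 \<Longrightarrow> z \<in> square 0 R"
    and \<Phi>: "\<And>z. \<bar>\<psi> z\<bar> \<le> \<Phi>" "\<And>z. \<bar>\<psi>x z\<bar> \<le> \<Phi>" "\<And>z. \<bar>\<psi>y z\<bar> \<le> \<Phi>"
    using smooth2_compact_support_bounds[OF assms] by blast
  \<comment> \<open>\<open>k\<^sup>2\<close> period cells cover a square of side \<open>4 R\<close>\<close>
  obtain k :: nat where "2 * (2 * R) / (2 * pi) \<le> real k"
    using real_arch_simple by blast
  then have k: "2 * (2 * R) \<le> real k * (2 * pi)"
    using pi_gt_zero by (simp add: divide_le_eq mult.commute)
  show ?thesis
  proof (rule that[of "\<Phi> * real k ^ 2"], unfold Let_def)
    show "0 \<le> \<Phi> * real k ^ 2"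
      using \<Phi>(1)[of 0] by simp
  next
    fix f :: "real \<times> real \<Rightarrow> real" and \<delta> M x y :: real
    assume f: "continuous_on UNIV f" "periodic2 f" and \<delta>: "0 < \<delta>" "\<delta> \<le> 1"
      and M: "\<Phi> * real k ^ 2 * integral period_cell (\<lambda>q. \<bar>f q\<bar>) \<le> M"
    have "periodic2 (\<lambda>q. \<bar>f q\<bar>)"
      using f(2) by (simp add: periodic2_def)
    then have "integral (square (x, y) (2 * R)) (\<lambda>q. \<bar>f q\<bar>) \<le> real k ^ 2 * integral period_cell (\<lambda>q. \<bar>f q\<bar>)"
      by (intro integral_periodic2_square_le[OF _ _ _ k] continuous_intros f(1)) auto
    then have "\<Phi> * integral (square (x, y) (2 * R)) (\<lambda>q. \<bar>f q\<bar>)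
        \<le> \<Phi> * (real k ^ 2 * integral period_cell (\<lambda>q. \<bar>f q\<bar>))"
      using \<Phi>(1)[of 0] by (intro mult_left_mono) auto
    with M have "\<Phi> * integral (square (x, y) (2 * R)) (\<lambda>q. \<bar>f q\<bar>) \<le> M"
      by (simp add: mult.assoc)
    from conv2_mollifier_estimates[OF f(1) \<psi>(2,3,4,1) R(2,1) \<Phi> \<delta> this]
    show "\<bar>conv2 f (mollifier \<delta> \<psi>) (x, y)\<bar> \<le> M / \<delta>^2
        \<and> (\<lambda>s. conv2 f (mollifier \<delta> \<psi>) (s, y)) differentiable (at x)
        \<and> \<bar>deriv (\<lambda>s. conv2 f (mollifier \<delta> \<psi>) (s, y)) x\<bar> \<le> M / \<delta>^3
        \<and> (\<lambda>s. conv2 f (mollifier \<delta> \<psi>) (x, s)) differentiable (at y)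
        \<and> \<bar>deriv (\<lambda>s. conv2 f (mollifier \<delta> \<psi>) (x, s)) y\<bar> \<le> M / \<delta>^3"
      by blast
  qed
qed

theorem mainTheorem8:
  fixes u v X X' :: "real \<Rightarrow> real \<Rightarrow> ((real \<times> real) \<Rightarrow>\<^sub>C real)"
    and \<rho>0 :: "real \<Rightarrow> ((real \<times> real) \<Rightarrow>\<^sub>C real)"
    and \<phi> :: "real \<times> real \<Rightarrow> real"
    and \<alpha> :: real
  assumes u_per: "\<And>\<epsilon> t. 0 < \<epsilon> \<Longrightarrow> \<epsilon> < 1 \<Longrightarrow> 0 \<le> t \<Longrightarrow> periodic2 (apply_bcontfun (u \<epsilon> t))"
    and v_per: "\<And>\<epsilon> t. 0 < \<epsilon> \<Longrightarrow> \<epsilon> < 1 \<Longrightarrow> 0 \<le> t \<Longrightarrow> periodic2 (apply_bcontfun (v \<epsilon> t))"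
    and u_cont: "\<And>\<epsilon>. 0 < \<epsilon> \<Longrightarrow> \<epsilon> < 1 \<Longrightarrow> continuous_on {0..} (u \<epsilon>)"
    and v_cont: "\<And>\<epsilon>. 0 < \<epsilon> \<Longrightarrow> \<epsilon> < 1 \<Longrightarrow> continuous_on {0..} (v \<epsilon>)"
    and uv_bdd: "\<exists>B. \<forall>\<epsilon> x y t. 0 < \<epsilon> \<and> \<epsilon> < 1 \<and> 0 \<le> t \<longrightarrow>
                   \<bar>apply_bcontfun (u \<epsilon> t) (x, y)\<bar> \<le> B \<and> \<bar>apply_bcontfun (v \<epsilon> t) (x, y)\<bar> \<le> B"
    and rho0_per: "\<And>\<epsilon>. 0 < \<epsilon> \<Longrightarrow> \<epsilon> < 1 \<Longrightarrow> periodic2 (apply_bcontfun (\<rho>0 \<epsilon>))"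
    and rho0_L1: "\<exists>C. \<forall>\<epsilon>. 0 < \<epsilon> \<and> \<epsilon> < 1 \<longrightarrow>
                   integral (cbox (-pi, -pi) (pi, pi)) (\<lambda>p. \<bar>apply_bcontfun (\<rho>0 \<epsilon>) p\<bar>) \<le> C"
    and X_init: "\<And>\<epsilon>. 0 < \<epsilon> \<Longrightarrow> \<epsilon> < 1 \<Longrightarrow> X \<epsilon> 0 = \<rho>0 \<epsilon>"
    and X'_cont: "\<And>\<epsilon>. 0 < \<epsilon> \<Longrightarrow> \<epsilon> < 1 \<Longrightarrow> continuous_on {0..} (X' \<epsilon>)"
    and X_deriv: "\<And>\<epsilon> t. 0 < \<epsilon> \<Longrightarrow> \<epsilon> < 1 \<Longrightarrow> 0 \<le> t \<Longrightarrow>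
                   (X \<epsilon> has_vector_derivative X' \<epsilon> t) (at t within {0..})"
    and X_eq: "\<And>\<epsilon> t x y. 0 < \<epsilon> \<Longrightarrow> \<epsilon> < 1 \<Longrightarrow> 0 \<le> t \<Longrightarrow>
                   apply_bcontfun (X' \<epsilon> t) (x, y) = upwind_rhs \<epsilon> (apply_bcontfun (X \<epsilon> t))
                     (apply_bcontfun (u \<epsilon> t)) (apply_bcontfun (v \<epsilon> t)) x y"
    and phi_smooth: "smooth2 \<phi>"
    and phi_supp: "compact (closure {p. \<phi> p \<noteq> 0})"
    and phi_int: "(\<phi> has_integral 1) UNIV"
    and alpha: "0 < \<alpha>" "\<alpha> \<le> 1"
  shows "\<exists>M>0. \<forall>\<epsilon> x y t. 0 < \<epsilon> \<and> \<epsilon> < 1 \<and> 0 \<le> t \<longrightarrow>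
           (let \<rho> = conv2 (apply_bcontfun (X \<epsilon> t)) (mollifier (\<epsilon> powr \<alpha>) \<phi>) in
              \<bar>\<rho> (x, y)\<bar> \<le> M / \<epsilon> powr (2 * \<alpha>)
            \<and> (\<lambda>s. \<rho> (s, y)) differentiable (at x)
            \<and> \<bar>deriv (\<lambda>s. \<rho> (s, y)) x\<bar> \<le> M / \<epsilon> powr (3 * \<alpha>)
            \<and> (\<lambda>s. \<rho> (x, s)) differentiable (at y)
            \<and> \<bar>deriv (\<lambda>s. \<rho> (x, s)) y\<bar> \<le> M / \<epsilon> powr (3 * \<alpha>))"
proof -
  obtain B where B: "\<And>\<epsilon> x y t. 0 < \<epsilon> \<Longrightarrow> \<epsilon> < 1 \<Longrightarrow> 0 \<le> t \<Longrightarrow>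
      \<bar>u \<epsilon> t (x, y)\<bar> \<le> B \<and> \<bar>v \<epsilon> t (x, y)\<bar> \<le> B"
    using uv_bdd by blast
  obtain C where C: "\<And>\<epsilon>. 0 < \<epsilon> \<Longrightarrow> \<epsilon> < 1 \<Longrightarrow> integral period_cell (\<lambda>p. \<bar>\<rho>0 \<epsilon> p\<bar>) \<le> C"
    using rho0_L1 by blast
  obtain K where "0 \<le> K" and K: "\<And>f \<delta> M x y. continuous_on UNIV f \<Longrightarrow> periodic2 f \<Longrightarrow> 0 < \<delta> \<Longrightarrow> \<delta> \<le> 1 \<Longrightarrow>
      K * integral period_cell (\<lambda>q. \<bar>f q\<bar>) \<le> M \<Longrightarrow>
      let \<rho> = conv2 f (mollifier \<delta> \<phi>) in
        \<bar>\<rho> (x, y)\<bar> \<le> M / \<delta>^2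
        \<and> (\<lambda>s. \<rho> (s, y)) differentiable (at x) \<and> \<bar>deriv (\<lambda>s. \<rho> (s, y)) x\<bar> \<le> M / \<delta>^3
        \<and> (\<lambda>s. \<rho> (x, s)) differentiable (at y) \<and> \<bar>deriv (\<lambda>s. \<rho> (x, s)) y\<bar> \<le> M / \<delta>^3"
    using periodic_mollification_bounds[OF phi_smooth phi_supp] by blast
  define M where "M = K * max C 0 + 1"
  show ?thesis
  proof (intro exI[of _ M] conjI allI impI, goal_cases)
    case 1
    show ?case using \<open>0 \<le> K\<close> by (simp add: M_def add_nonneg_pos)
  next
    case (2 \<epsilon> x y t)
    then have \<epsilon>: "0 < \<epsilon>" "\<epsilon> < 1" and "0 \<le> t" by auto
    have "\<bar>u \<epsilon> s p\<bar> \<le> B" "\<bar>v \<epsilon> s p\<bar> \<le> B" if "0 \<le> s" for s p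
      using B[OF \<epsilon> that, of "fst p" "snd p"] by simp_all
    then interpret upwind_solution \<epsilon> B "X \<epsilon>" "X' \<epsilon>" "u \<epsilon>" "v \<epsilon>"
      using \<epsilon> X_deriv X_eq u_per v_per by unfold_locales auto
    have X0: "periodic2 (X \<epsilon> 0)"
      using rho0_per[OF \<epsilon>] X_init[OF \<epsilon>] by simp
    have L1: "integral period_cell (\<lambda>q. \<bar>X \<epsilon> t q\<bar>) \<le> max C 0"
      using L1_nonincreasing[OF X0 \<open>0 \<le> t\<close>] C[OF \<epsilon>] X_init[OF \<epsilon>] by simp
    have KM: "K * integral period_cell (\<lambda>q. \<bar>X \<epsilon> t q\<bar>) \<le> M"
      using mult_left_mono[OF L1 \<open>0 \<le> K\<close>] by (simp add: M_def)
    have \<delta>: "0 < \<epsilon> powr \<alpha>" "\<epsilon> powr \<alpha> \<le> 1"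
      using \<epsilon> alpha by (simp_all add: powr_le1)
    show ?case
      using K[OF continuous_on_apply_bcontfun periodic[OF X0 \<open>0 \<le> t\<close>] \<delta> KM, where x=x and y=y]
        \<open>0 < \<epsilon>\<close>
      by (simp add: Let_def powr_power)
  qed
qed

end
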